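(* Let $F_2$ be the free group with basis $\{a,b\}$, let $\mathcal{O}\subseteq\mathbb{N}$ be a set of non-negative integers closed under taking divisors and containing $0$, and let $K_{\mathcal{O}}=\langle b^{-n}a^nb^n : n\in\mathcal{O}\rangle\leqslant F_2$. Then $\mathrm{Ord}_{K_{\mathcal{O}}}(F_2)=\mathcal{O}$, and the rank of $K_{\mathcal{O}}$ equals the cardinality of $\mathcal{O}\setminus\{0\}$.
   Context: Convention: no natural number divides $0$. For a group $G$, a subset $S\subseteq G$ and $g\in G$, $\mathrm{Ord}_S(g)=\min\{k\geq 1: g^k\in S\}$ if such $k$ exists and $0$ otherwise; $\mathrm{Ord}_S(G)=\{\mathrm{Ord}_S(g):g\in G\}$. *)

theory Defs
  imports "HOL-Algebra.Algebra" "HOL-Library.Equipollence"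
begin

text \<open>A letter is a pair (g, e): g = False means generator a, g = True means b;
  e = False means the generator itself, e = True its inverse.\<close>

type_synonym letter = "bool \<times> bool"

definition inv_letter :: "letter \<Rightarrow> letter" where
  "inv_letter l = (fst l, \<not> snd l)"

fun reduced :: "letter list \<Rightarrow> bool" where
  "reduced [] = True"
| "reduced [x] = True"
| "reduced (x # y # ys) = (y \<noteq> inv_letter x \<and> reduced (y # ys))"

definition cancel_cons :: "letter \<Rightarrow> letter list \<Rightarrow> letter list" where
  "cancel_cons x ys = (case ys of [] \<Rightarrow> [x]
      | y # ys' \<Rightarrow> (if y = inv_letter x then ys' else x # ys))"

definition red :: "letter list \<Rightarrow> letter list" where
  "red xs = foldr cancel_cons xs []"

definition F2 :: "letter list monoid" where
  "F2 = \<lparr> carrier = {w. reduced w}, monoid.mult = (\<lambda>x y. red (x @ y)), one = [] \<rparr>"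

definition gen_a :: "letter list" where "gen_a = [(False, False)]"
definition gen_b :: "letter list" where "gen_b = [(True, False)]"

definition Ord_in :: "('a, 'b) monoid_scheme \<Rightarrow> 'a set \<Rightarrow> 'a \<Rightarrow> nat" where
  "Ord_in G S g = (if \<exists>k::nat. k \<ge> 1 \<and> g [^]\<^bsub>G\<^esub> k \<in> S
                    then (LEAST k::nat. k \<ge> 1 \<and> g [^]\<^bsub>G\<^esub> k \<in> S) else 0)"

definition Ord_set :: "('a, 'b) monoid_scheme \<Rightarrow> 'a set \<Rightarrow> nat set" where
  "Ord_set G S = Ord_in G S ` carrier G"

definition K_O :: "nat set \<Rightarrow> letter list set" where
  "K_O Os = generate F2
     {(gen_b [^]\<^bsub>F2\<^esub> (- int n)) \<otimes>\<^bsub>F2\<^esub> (gen_a [^]\<^bsub>F2\<^esub> n) \<otimes>\<^bsub>F2\<^esub> (gen_b [^]\<^bsub>F2\<^esub> n) | n. n \<in> Os}"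

text \<open>"The rank of the subgroup H of G equals the cardinality of X":
  H has a generating set equipotent to X, and X injects into every generating set of H
  (rank = minimal cardinality of a generating set; works for infinite cardinals too).\<close>
definition rank_eq_card :: "('a, 'b) monoid_scheme \<Rightarrow> 'a set \<Rightarrow> 'c set \<Rightarrow> bool" where
  "rank_eq_card G H Xs \<longleftrightarrow>
     (\<exists>S. S \<subseteq> carrier G \<and> generate G S = H \<and> S \<approx> Xs) \<and>
     (\<forall>S. S \<subseteq> carrier G \<and> generate G S = H \<longrightarrow> Xs \<lesssim> S)"

end

theory Submission
  imports Defs
begin

text \<open>
  K_O is the fundamental group of its Stallings core graph: a ray of spine vertices
  0, 1, 2, ... joined by b-edges (vertex i is reached from the base by b^-i), with an
  a-cycle of length n attached at spine vertex n for every nonzero n in O. A reduced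
  word lies in K_O iff it reads a closed path at the base vertex.

  Orders: write g = u c u^-1 with c cyclically reduced, and let v be the end of the path
  read by u. If c contains b, the height of the path of c^k is periodic and paths are
  determined by their endpoint, so c^k closes at v only if c does; g then has order 1.
  Otherwise c = a^j or a^-j, the path of c^k runs around the cycle of some length n in O
  and closes iff n divides kj; so g^n lies in K_O and the order of g divides n. Conversely
  b has order 0 and b^-n a b^n has order n.

  Rank: counting modulo 2 the crossings of the closing edge of each a-cycle is a
  homomorphism from K_O to the F_2-vector space with basis O - {0}, sending
  b^-n a^n b^n to the n-th basis vector. Hence every generating set has at least
  |O - {0}| elements, and these generators attain the bound.
\<close>

lemma Ord_in_eq_0_iff: "Ord_in G S g = 0 \<longleftrightarrow> (\<forall>k::nat. k \<ge> 1 \<longrightarrow> g [^]\<^bsub>G\<^esub> k \<notin> S)"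
proof (cases "\<exists>k::nat. k \<ge> 1 \<and> g [^]\<^bsub>G\<^esub> k \<in> S")
  case True
  have "(LEAST k::nat. k \<ge> 1 \<and> g [^]\<^bsub>G\<^esub> k \<in> S) \<ge> 1"
    by (rule LeastI2_ex[OF True]) blast
  then show ?thesis
    using True by (simp only: Ord_in_def if_True) auto
qed (auto simp: Ord_in_def)

lemma Ord_in_eqI_dvd:
  assumes "n \<noteq> 0" "\<And>k. k \<ge> 1 \<Longrightarrow> g [^]\<^bsub>G\<^esub> k \<in> S \<longleftrightarrow> n dvd k"
  shows "Ord_in G S g = n"
proof -
  have "(LEAST k::nat. k \<ge> 1 \<and> g [^]\<^bsub>G\<^esub> k \<in> S) = n"
    using assms by (intro Least_equality) (auto intro: dvd_imp_le)
  moreover have "\<exists>k::nat. k \<ge> 1 \<and> g [^]\<^bsub>G\<^esub> k \<in> S"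
    using assms by (intro exI[of _ n]) auto
  ultimately show ?thesis
    by (simp add: Ord_in_def)
qed

lemma (in group) Ord_in_dvd:
  assumes "subgroup H G" "g \<in> carrier G" "g [^] k \<in> H"
  shows "Ord_in G H g dvd k"
proof (cases "k = 0")
  case False
  define m where "m = Ord_in G H g"
  have ex: "\<exists>k::nat. k \<ge> 1 \<and> g [^] k \<in> H"
    using assms False by (intro exI[of _ k]) auto
  then have m_Least: "m = (LEAST k::nat. k \<ge> 1 \<and> g [^] k \<in> H)"
    by (simp add: m_def Ord_in_def)
  then have m: "m \<ge> 1" "g [^] m \<in> H"
    using LeastI_ex[OF ex] by auto
  have "g [^] k = (g [^] m) [^] (k div m) \<otimes> g [^] (k mod m)"
    using assms(2) by (simp add: nat_pow_pow nat_pow_mult)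
  then have "g [^] (k mod m) = inv ((g [^] m) [^] (k div m)) \<otimes> g [^] k"
    using assms(2) by (simp add: inv_solve_left)
  moreover have "(g [^] m) [^] (k div m) \<in> H"
    using subgroup_int_pow_closed[OF assms(1) m(2), of "int (k div m)"] by (simp add: int_pow_int)
  ultimately have "g [^] (k mod m) \<in> H"
    using assms by (simp add: subgroup.m_closed subgroup.m_inv_closed)
  have "k mod m = 0"
  proof (rule ccontr)
    assume "k mod m \<noteq> 0"
    with \<open>g [^] (k mod m) \<in> H\<close> have "m \<le> k mod m"
      unfolding m_Least by (intro Least_le) simp
    with m(1) show False
      using mod_less_divisor[of m k] by linarith
  qed
  then show ?thesis
    by (simp add: m_def mod_eq_0_iff_dvd)
qed simp

section \<open>Parity sums\<close>

lemma odd_card_sym_diff: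
  assumes "finite A" "finite B"
  shows "odd (card (sym_diff A B)) \<longleftrightarrow> odd (card A) \<noteq> odd (card B)"
proof -
  have "card (sym_diff A B) = card (A - B) + card (B - A)"
    using assms by (intro card_Un_disjoint) auto
  moreover have "card A = card (A \<inter> B) + card (A - B)" "card B = card (A \<inter> B) + card (B - A)"
    using assms card_Int_Diff[of A B] card_Int_Diff[of B A] by (simp_all add: Int_commute)
  ultimately have "card (sym_diff A B) + 2 * card (A \<inter> B) = card A + card B"
    by simp
  then show ?thesis
    by presburger
qed

text \<open>Vectors over F_2 are predicates, added by \<open>\<noteq>\<close>: \<open>parity_sum T\<close> is the sum of the
  vectors in T, so \<open>parity_sum ` Pow Y\<close> is the span of a finite set Y.\<close>

definition parity_sum :: "('a \<Rightarrow> bool) set \<Rightarrow> 'a \<Rightarrow> bool" where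
  "parity_sum T m \<longleftrightarrow> odd (card {f \<in> T. f m})"

lemma parity_sum_empty [simp]: "parity_sum {} = (\<lambda>m. False)"
  by (simp add: parity_sum_def fun_eq_iff)

lemma parity_sum_singleton [simp]: "parity_sum {f} = f"
proof
  fix m
  have "{g \<in> {f}. g m} = (if f m then {f} else {})"
    by auto
  then show "parity_sum {f} m = f m"
    by (simp add: parity_sum_def)
qed

lemma parity_sum_sym_diff:
  assumes "finite A" "finite B"
  shows "parity_sum (sym_diff A B) m \<longleftrightarrow> parity_sum A m \<noteq> parity_sum B m"
proof -
  have "{f \<in> sym_diff A B. f m} = sym_diff {f \<in> A. f m} {f \<in> B. f m}"
    by auto
  then show ?thesis
    using odd_card_sym_diff[of "{f \<in> A. f m}" "{f \<in> B. f m}"] assms by (simp add: parity_sum_def)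
qed

lemma parity_sum_Pow_xor_closed:
  assumes "finite Y" "f \<in> parity_sum ` Pow Y" "g \<in> parity_sum ` Pow Y"
  shows "(\<lambda>m. f m \<noteq> g m) \<in> parity_sum ` Pow Y"
proof -
  obtain A B where "A \<subseteq> Y" "B \<subseteq> Y" "f = parity_sum A" "g = parity_sum B"
    using assms(2,3) by blast
  moreover from this have "finite A" "finite B"
    using assms(1) finite_subset by blast+
  ultimately show ?thesis
    by (intro image_eqI[of _ _ "sym_diff A B"]) (auto simp: parity_sum_sym_diff)
qed

lemma indicator_in_parity_sums:
  assumes "finite Y" "finite T" "\<And>n. n \<in> T \<Longrightarrow> (\<lambda>m. m = n) \<in> parity_sum ` Pow Y"
  shows "(\<lambda>m. m \<in> T) \<in> parity_sum ` Pow Y"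
  using assms(2,3)
proof (induction T rule: finite_induct)
  case empty
  then show ?case
    by (auto intro: image_eqI[of _ _ "{}"])
next
  case (insert n T)
  then have "(\<lambda>m. (m = n) \<noteq> (m \<in> T)) \<in> parity_sum ` Pow Y"
    by (intro parity_sum_Pow_xor_closed[OF assms(1)]) auto
  moreover have "(\<lambda>m. (m = n) \<noteq> (m \<in> T)) = (\<lambda>m. m \<in> insert n T)"
    using insert.hyps by auto
  ultimately show ?case
    by simp
qed

lemma card_le_if_unit_vectors_parity_sums:
  assumes "finite Y" and unit: "\<And>n. n \<in> N \<Longrightarrow> (\<lambda>m. m = n) \<in> parity_sum ` Pow Y"
  shows "finite N \<and> card N \<le> card Y"
proof -
  have fin_sums: "finite (parity_sum ` Pow Y)"
    using assms(1) by simp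
  have "inj_on (\<lambda>n m. m = n) N"
    by (auto simp: inj_on_def dest: fun_cong)
  moreover have "(\<lambda>n m. m = n) ` N \<subseteq> parity_sum ` Pow Y"
    using unit by blast
  ultimately have "finite N"
    using fin_sums by (rule inj_on_finite)
  then have "(\<lambda>T m. m \<in> T) ` Pow N \<subseteq> parity_sum ` Pow Y"
    using indicator_in_parity_sums[OF assms(1) finite_subset] unit by blast
  moreover have "inj_on (\<lambda>T m. m \<in> T) (Pow N)"
    by (rule inj_onI) (simp add: fun_eq_iff set_eq_iff)
  ultimately have "card (Pow N) \<le> card (parity_sum ` Pow Y)"
    using fin_sums by (metis card_image card_mono)
  also have "\<dots> \<le> card (Pow Y)"
    using assms(1) by (simp add: card_image_le)
  finally have "(2::nat) ^ card N \<le> 2 ^ card Y"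
    using \<open>finite N\<close> assms(1) by (simp add: card_Pow)
  with \<open>finite N\<close> show ?thesis
    by simp
qed

section \<open>Reduced words and the group F2\<close>

abbreviation "la \<equiv> (False, False)"
abbreviation "la_inv \<equiv> (False, True)"
abbreviation "lb \<equiv> (True, False)"
abbreviation "lb_inv \<equiv> (True, True)"

lemma letter_cases [case_names a a_inv b b_inv]:
  "(x = la \<Longrightarrow> P) \<Longrightarrow> (x = la_inv \<Longrightarrow> P) \<Longrightarrow> (x = lb \<Longrightarrow> P) \<Longrightarrow> (x = lb_inv \<Longrightarrow> P) \<Longrightarrow> P"
  by (cases x) auto

definition inv_word :: "letter list \<Rightarrow> letter list" where
  "inv_word w = rev (map inv_letter w)"

lemma inv_letter_inv [simp]: "inv_letter (inv_letter x) = x"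
  by (simp add: inv_letter_def)

lemma inv_letter_neq [simp]: "inv_letter x \<noteq> x" "x \<noteq> inv_letter x"
  by (auto simp: inv_letter_def prod_eq_iff)

lemma inv_letter_letters [simp]:
  "inv_letter la = la_inv" "inv_letter la_inv = la" "inv_letter lb = lb_inv" "inv_letter lb_inv = lb"
  by (auto simp: inv_letter_def)

lemma inv_word_simps [simp]:
  "inv_word [] = []" "inv_word (x # xs) = inv_word xs @ [inv_letter x]"
  "inv_word (xs @ ys) = inv_word ys @ inv_word xs" "inv_word (inv_word xs) = xs"
  "inv_word (replicate n x) = replicate n (inv_letter x)"
  by (auto simp: inv_word_def rev_map[symmetric] comp_def)

lemma reduced_Cons: "reduced (x # xs) \<longleftrightarrow> reduced xs \<and> (xs = [] \<or> hd xs \<noteq> inv_letter x)"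
  by (cases xs) auto

lemma reduced_append:
  "reduced (xs @ ys) \<longleftrightarrow> reduced xs \<and> reduced ys \<and> (xs = [] \<or> ys = [] \<or> hd ys \<noteq> inv_letter (last xs))"
  by (induction xs rule: reduced.induct) (auto simp: reduced_Cons)

lemma reduced_inv_word [simp]: "reduced (inv_word xs) = reduced xs"
proof (induction xs rule: reduced.induct)
  case (3 x y ys)
  then show ?case
    by (cases ys) (auto simp: reduced_append)
qed auto

lemma reduced_replicate: "x \<noteq> inv_letter x \<Longrightarrow> reduced (replicate n x)"
  by (induction n) (auto simp: reduced_Cons)

lemma reduced_cancel_cons: "reduced ys \<Longrightarrow> reduced (cancel_cons x ys)"
  by (cases ys) (auto simp: cancel_cons_def reduced_Cons)

lemma reduced_foldr_cancel_cons: "reduced z \<Longrightarrow> reduced (foldr cancel_cons xs z)"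
  by (induction xs) (auto simp: reduced_cancel_cons)

lemma reduced_red [simp]: "reduced (red xs)"
  unfolding red_def by (rule reduced_foldr_cancel_cons) simp

lemma red_Nil [simp]: "red [] = []"
  by (simp add: red_def)

lemma red_Cons: "red (x # xs) = cancel_cons x (red xs)"
  by (simp add: red_def)

lemma red_append: "red (xs @ ys) = foldr cancel_cons xs (red ys)"
  by (simp add: red_def)

lemma red_reduced: "reduced xs \<Longrightarrow> red xs = xs"
  by (induction xs rule: reduced.induct) (auto simp: red_Cons cancel_cons_def)

lemma cancel_cons_inv: "reduced ys \<Longrightarrow> cancel_cons (inv_letter x) (cancel_cons x ys) = ys"
  by (cases ys) (auto simp: cancel_cons_def reduced_Cons split: list.splits)

lemma foldr_cancel_cons_cancel_cons:
  assumes "reduced r" "reduced z"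
  shows "foldr cancel_cons (cancel_cons x r) z = cancel_cons x (foldr cancel_cons r z)"
proof (cases r)
  case (Cons y r')
  have "reduced (foldr cancel_cons r' z)"
    using assms Cons by (auto intro: reduced_foldr_cancel_cons simp: reduced_Cons)
  then show ?thesis
    using Cons cancel_cons_inv[of "foldr cancel_cons r' z" "inv_letter x"]
    by (auto simp: cancel_cons_def)
qed (simp add: cancel_cons_def)

lemma foldr_cancel_cons_red: "reduced z \<Longrightarrow> foldr cancel_cons (red xs) z = foldr cancel_cons xs z"
  by (induction xs) (simp_all add: red_Cons foldr_cancel_cons_cancel_cons)

lemma red_red_append [simp]: "red (red xs @ ys) = red (xs @ ys)"
  by (simp add: red_append foldr_cancel_cons_red)

lemma red_append_red [simp]: "red (xs @ red ys) = red (xs @ ys)"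
  by (simp add: red_append red_reduced)

lemma foldr_cancel_cons_inv_word: "reduced z \<Longrightarrow> foldr cancel_cons (xs @ inv_word xs) z = z"
proof (induction xs arbitrary: z)
  case (Cons x xs)
  then show ?case
    using cancel_cons_inv[of z "inv_letter x"] by (simp add: reduced_cancel_cons)
qed simp

lemma red_cancel_inv_word: "red (xs @ inv_word ys @ ys @ zs) = red (xs @ zs)"
proof -
  have "red (inv_word ys @ ys @ zs) = red zs"
    using foldr_cancel_cons_inv_word[of "red zs" "inv_word ys"] by (simp add: red_append)
  then show ?thesis
    by (metis red_append_red)
qed

lemma red_cancel_inv_word': "red (xs @ ys @ inv_word ys @ zs) = red (xs @ zs)"
  using red_cancel_inv_word[of xs "inv_word ys" zs] by simp

lemma red_append_inv_word [simp]: "red (ys @ inv_word ys) = []"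
  using red_cancel_inv_word'[of "[]" ys "[]"] by simp

lemma F2_simps [simp]:
  "carrier F2 = {w. reduced w}" "x \<otimes>\<^bsub>F2\<^esub> y = red (x @ y)" "\<one>\<^bsub>F2\<^esub> = []"
  by (auto simp: F2_def)

lemma group_F2: "group F2"
proof (rule groupI)
  fix x assume "x \<in> carrier F2"
  then show "\<exists>y\<in>carrier F2. y \<otimes>\<^bsub>F2\<^esub> x = \<one>\<^bsub>F2\<^esub>"
    using red_append_inv_word[of "inv_word x"] by (intro bexI[of _ "inv_word x"]) auto
qed (auto simp: red_reduced)

interpretation F2: group F2
  by (rule group_F2)

lemma inv_F2: "reduced x \<Longrightarrow> inv\<^bsub>F2\<^esub> x = inv_word x"
  using red_append_inv_word[of "inv_word x"] by (intro F2.inv_equality) auto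

lemma red_inv_word: "red (inv_word xs) = inv_word (red xs)"
proof -
  have "red (inv_word xs) \<otimes>\<^bsub>F2\<^esub> red xs = \<one>\<^bsub>F2\<^esub>"
    using red_cancel_inv_word[of "[]" xs "[]"] by simp
  then show ?thesis
    using F2.inv_equality[of "red (inv_word xs)" "red xs"] by (simp add: inv_F2)
qed

definition cyclically_reduced :: "letter list \<Rightarrow> bool" where
  "cyclically_reduced c \<longleftrightarrow> c \<noteq> [] \<and> reduced c \<and> hd c \<noteq> inv_letter (last c)"

lemma hd_last_concat_replicate:
  assumes "k \<noteq> 0" "c \<noteq> []"
  shows "concat (replicate k c) \<noteq> []" "hd (concat (replicate k c)) = hd c"
    "last (concat (replicate k c)) = last c"
  using assms by (induction k) (auto simp: hd_append last_append)

lemma reduced_concat_replicate: "cyclically_reduced c \<Longrightarrow> reduced (concat (replicate k c))"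
  by (induction k) (auto simp: reduced_append cyclically_reduced_def hd_last_concat_replicate)

lemma reduced_conj_power:
  assumes "reduced (u @ c @ inv_word u)" "cyclically_reduced c" "k \<noteq> 0"
  shows "reduced (u @ concat (replicate k c) @ inv_word u)"
  using assms reduced_concat_replicate[OF assms(2)]
  by (auto simp: reduced_append cyclically_reduced_def hd_last_concat_replicate)

lemma F2_pow_conj:
  assumes "reduced (u @ c @ inv_word u)" "cyclically_reduced c" "k \<noteq> 0"
  shows "(u @ c @ inv_word u) [^]\<^bsub>F2\<^esub> k = u @ concat (replicate k c) @ inv_word u"
  using assms(3)
proof (induction k)
  case (Suc k)
  show ?case
  proof (cases "k = 0")
    case True
    then show ?thesis using assms by (simp add: red_reduced)
  next
    case False
    have "(u @ c @ inv_word u) [^]\<^bsub>F2\<^esub> Suc k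
        = (u @ c @ inv_word u) \<otimes>\<^bsub>F2\<^esub> (u @ c @ inv_word u) [^]\<^bsub>F2\<^esub> k"
      using assms by (intro F2.nat_pow_Suc2) simp
    also have "\<dots> = red ((u @ c) @ inv_word u @ u @ concat (replicate k c) @ inv_word u)"
      using Suc False by simp
    also have "\<dots> = red (u @ concat (replicate (Suc k) c) @ inv_word u)"
      by (simp only: red_cancel_inv_word) simp
    finally show ?thesis
      using reduced_conj_power[OF assms(1,2), of "Suc k"] by (simp add: red_reduced)
  qed
qed simp

lemma ex_conj_cyclically_reduced:
  "reduced g \<Longrightarrow> g \<noteq> [] \<Longrightarrow> \<exists>u c. g = u @ c @ inv_word u \<and> cyclically_reduced c"
proof (induction "length g" arbitrary: g rule: less_induct)
  case less
  show ?case
  proof (cases "hd g = inv_letter (last g)")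
    case False
    then show ?thesis
      using less by (intro exI[of _ "[]"] exI[of _ g]) (simp add: cyclically_reduced_def)
  next
    case True
    obtain x r where "g = x # r"
      using less.prems by (cases g) auto
    moreover have "r \<noteq> []"
      using True \<open>g = x # r\<close> by auto
    then obtain m y where "r = m @ [y]"
      by (metis rev_exhaust)
    ultimately have g: "g = x # m @ [inv_letter x]"
      using True by simp
    then have "reduced m" "m \<noteq> []"
      using less.prems by (auto simp: reduced_Cons reduced_append)
    then obtain u c where "m = u @ c @ inv_word u" "cyclically_reduced c"
      using less.hyps[of m] g by auto
    then show ?thesis
      using g by (intro exI[of _ "x # u"] exI[of _ c]) simp
  qed
qed

lemma F2_pow_letter: "[x] [^]\<^bsub>F2\<^esub> k = replicate k x"
  using F2_pow_conj[of "[]" "[x]" k] by (cases "k = 0") (auto simp: cyclically_reduced_def)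

lemma concat_replicate_replicate: "concat (replicate k (replicate j x)) = replicate (k * j) x"
  by (induction k) (simp_all add: replicate_add)

lemma reduced_a_letters_eq_replicate:
  assumes "reduced c" "\<forall>x\<in>set c. \<not> fst x"
  shows "c = replicate (length c) (hd c)"
proof -
  have "\<forall>y\<in>set c. y = hd c"
    using assms
  proof (induction c rule: reduced.induct)
    case (3 x y ys)
    then have "y = x"
      by (cases x; cases y) (auto simp: inv_letter_def)
    with 3 show ?case
      by auto
  qed auto
  then show ?thesis
    by (simp add: replicate_length_same)
qed

definition K_generator :: "nat \<Rightarrow> letter list" where
  "K_generator n = replicate n lb_inv @ replicate n la @ replicate n lb"

lemma reduced_K_generator: "reduced (K_generator n)"
  by (cases "n = 0") (simp_all add: K_generator_def reduced_append reduced_replicate)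

lemma K_generator_eq:
  "(gen_b [^]\<^bsub>F2\<^esub> (- int n)) \<otimes>\<^bsub>F2\<^esub> (gen_a [^]\<^bsub>F2\<^esub> n) \<otimes>\<^bsub>F2\<^esub> (gen_b [^]\<^bsub>F2\<^esub> n) = K_generator n"
proof -
  have "gen_b [^]\<^bsub>F2\<^esub> (- int n) = replicate n lb_inv"
    by (simp add: F2.int_pow_neg_int gen_b_def F2_pow_letter inv_F2 reduced_replicate)
  then show ?thesis
    using reduced_K_generator[of n] 
    by (simp add: gen_a_def gen_b_def F2_pow_letter red_reduced K_generator_def)
qed

lemma K_O_eq_generate: "K_O Os = generate F2 (K_generator ` Os)"
  unfolding K_O_def K_generator_eq by (simp add: setcompr_eq_image)

lemma subgroup_K_O: "subgroup (K_O Os) F2"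
  unfolding K_O_eq_generate using reduced_K_generator by (intro F2.generate_is_subgroup) auto

lemma K_generator_in_K_O: "n \<in> Os \<Longrightarrow> K_generator n \<in> K_O Os"
  unfolding K_O_eq_generate by (auto intro: generate.incl)

lemma Nil_in_K_O [simp]: "[] \<in> K_O Os"
  using subgroup.one_closed[OF subgroup_K_O] by simp

lemma red_append_in_K_O: "g \<in> K_O Os \<Longrightarrow> h \<in> K_O Os \<Longrightarrow> red (g @ h) \<in> K_O Os"
  using subgroup.m_closed[OF subgroup_K_O] by fastforce

lemma inv_word_in_K_O: "g \<in> K_O Os \<Longrightarrow> inv_word g \<in> K_O Os"
  using subgroup.m_inv_closed[OF subgroup_K_O] subgroup.subset[OF subgroup_K_O]
  by (fastforce simp: inv_F2)

lemma generate_K_generator_nonzero: "generate F2 (K_generator ` (Os - {0})) = K_O Os"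
proof
  have "K_generator ` (Os - {0}) \<subseteq> K_O Os"
    by (auto simp: K_generator_in_K_O)
  then show "generate F2 (K_generator ` (Os - {0})) \<subseteq> K_O Os"
    by (rule F2.generate_subgroup_incl[OF _ subgroup_K_O])
  have "K_generator n \<in> generate F2 (K_generator ` (Os - {0}))" if "n \<in> Os" for n
  proof (cases "n = 0")
    case True
    then show ?thesis
      using generate.one[of F2 "K_generator ` (Os - {0})"] by (simp add: K_generator_def)
  qed (use that in \<open>auto intro: generate.incl\<close>)
  then have "K_generator ` Os \<subseteq> generate F2 (K_generator ` (Os - {0}))"
    by blast
  then show "K_O Os \<subseteq> generate F2 (K_generator ` (Os - {0}))"
    unfolding K_O_eq_generate using reduced_K_generator
    by (intro F2.generate_subgroup_incl F2.generate_is_subgroup) auto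
qed

lemma inj_K_generator: "inj K_generator"
proof (rule injI)
  fix m n
  assume "K_generator m = K_generator n"
  then have "length (K_generator m) = length (K_generator n)"
    by simp
  then show "m = n"
    by (simp add: K_generator_def)
qed

section \<open>The core graph of K_O\<close>

context
  fixes Os :: "nat set"
begin

text \<open>The vertex (i, 0) is the spine vertex at height i; for n in Os and 0 < j < n, the vertex
  (n, j) is reached from (n, 0) by a^j along the a-cycle of length n.\<close>

definition on_spine :: "nat \<Rightarrow> bool" where
  "on_spine i \<longleftrightarrow> (\<exists>n\<in>Os. i \<le> n)"

lemma on_spine_mono: "on_spine i \<Longrightarrow> i' \<le> i \<Longrightarrow> on_spine i'"
  unfolding on_spine_def by (meson order_trans)

lemma on_spine_Os: "n \<in> Os \<Longrightarrow> on_spine n"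
  by (auto simp: on_spine_def)

fun step :: "nat \<times> nat \<Rightarrow> letter \<Rightarrow> (nat \<times> nat) option" where
  "step (i, j) lb_inv = (if j = 0 \<and> on_spine (Suc i) then Some (Suc i, 0) else None)"
| "step (i, j) lb = (if j = 0 \<and> 0 < i \<and> on_spine i then Some (i - 1, 0) else None)"
| "step (n, j) la =
     (if n \<in> Os \<and> 0 < n \<and> j < n then Some (n, if Suc j = n then 0 else Suc j) else None)"
| "step (n, j) la_inv =
     (if n \<in> Os \<and> 0 < n \<and> j < n then Some (n, if j = 0 then n - 1 else j - 1) else None)"

text \<open>\<open>crosses v x m\<close>: the edge read by x from v is the closing edge (m, m - 1) to (m, 0)
  of the a-cycle at height m, in either direction.\<close>

fun crosses :: "nat \<times> nat \<Rightarrow> letter \<Rightarrow> nat \<Rightarrow> bool" where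
  "crosses (n, j) la = (\<lambda>m. m = n \<and> Suc j = n)"
| "crosses (n, j) la_inv = (\<lambda>m. m = n \<and> j = 0)"
| "crosses v (True, e) = (\<lambda>m. False)"

fun walk :: "nat \<times> nat \<Rightarrow> letter list \<Rightarrow> (nat \<times> nat) option" where
  "walk v [] = Some v"
| "walk v (x # xs) = (case step v x of None \<Rightarrow> None | Some w \<Rightarrow> walk w xs)"

fun parity :: "nat \<times> nat \<Rightarrow> letter list \<Rightarrow> nat \<Rightarrow> bool" where
  "parity v [] = (\<lambda>m. False)"
| "parity v (x # xs) =
     (case step v x of None \<Rightarrow> (\<lambda>m. False) | Some w \<Rightarrow> (\<lambda>m. crosses v x m \<noteq> parity w xs m))"

lemma step_inv: "step v x = Some w \<Longrightarrow> step w (inv_letter x) = Some v"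
  by (cases v; cases x rule: letter_cases)
     (auto simp: inv_letter_def split: if_splits)

lemma crosses_inv: "step v x = Some w \<Longrightarrow> crosses w (inv_letter x) = crosses v x"
  by (cases v; cases x rule: letter_cases)
     (auto simp: inv_letter_def split: if_splits)

lemma walk_append: "walk v (xs @ ys) = (case walk v xs of None \<Rightarrow> None | Some w \<Rightarrow> walk w ys)"
  by (induction xs arbitrary: v) (auto split: option.splits)

lemma walk_appendI: "walk v xs = Some u \<Longrightarrow> walk u ys = Some w \<Longrightarrow> walk v (xs @ ys) = Some w"
  by (simp add: walk_append)

lemma walk_appendE:
  assumes "walk v (xs @ ys) = Some w"
  obtains u where "walk v xs = Some u" "walk u ys = Some w"
  using assms by (auto simp: walk_append split: option.splits)

lemma parity_append:
  "walk v xs = Some u \<Longrightarrow> parity v (xs @ ys) m = (parity v xs m \<noteq> parity u ys m)"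
  by (induction xs arbitrary: v) (auto split: option.splits)

lemma walk_inv_word:
  "walk v xs = Some w \<Longrightarrow> walk w (inv_word xs) = Some v \<and> parity w (inv_word xs) = parity v xs"
proof (induction xs arbitrary: v)
  case (Cons x xs)
  then obtain u where u: "step v x = Some u" "walk u xs = Some w"
    by (cases "step v x") auto
  with Cons.IH have IH: "walk w (inv_word xs) = Some u" "parity w (inv_word xs) = parity u xs"
    by auto
  with u show ?case
    by (auto simp: walk_append parity_append step_inv crosses_inv)
qed simp

lemma walk_red:
  "walk v xs = Some w \<Longrightarrow> walk v (red xs) = Some w \<and> parity v (red xs) = parity v xs"
proof (induction xs arbitrary: v)
  case (Cons x xs)
  then obtain u where u: "step v x = Some u" "walk u xs = Some w"
    by (cases "step v x") auto
  with Cons.IH have IH: "walk u (red xs) = Some w" "parity u (red xs) = parity u xs"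
    by auto
  show ?case
  proof (cases "\<exists>r. red xs = inv_letter x # r")
    case True
    then obtain r where r: "red xs = inv_letter x # r" ..
    then have "red (x # xs) = r"
      by (simp add: red_Cons cancel_cons_def)
    with IH r u step_inv[OF u(1)] crosses_inv[OF u(1)] show ?thesis
      by (fastforce dest: fun_cong)
  next
    case False
    then have "red (x # xs) = x # red xs"
      by (auto simp: red_Cons cancel_cons_def split: list.splits)
    with IH u show ?thesis
      by simp
  qed
qed simp

lemma walk_inj: "walk v xs = Some w \<Longrightarrow> walk v' xs = Some w \<Longrightarrow> v = v'"
  using walk_inv_word[of v xs w] walk_inv_word[of v' xs w] by simp

definition height_change :: "letter \<Rightarrow> int" where
  "height_change x = (if x = lb_inv then 1 else if x = lb then -1 else 0)"

lemma walk_height: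
  "walk v xs = Some w \<Longrightarrow> int (fst w) = int (fst v) + (\<Sum>x\<leftarrow>xs. height_change x)"
proof (induction xs arbitrary: v)
  case (Cons x xs)
  then obtain u where u: "step v x = Some u" "walk u xs = Some w"
    by (cases "step v x") auto
  then have "int (fst u) = int (fst v) + height_change x"
    by (cases v; cases x rule: letter_cases) (auto simp: height_change_def split: if_splits)
  with Cons.IH[OF u(2)] show ?case
    by simp
qed simp

lemma parity_b_letters: "\<forall>x\<in>set xs. fst x \<Longrightarrow> parity v xs = (\<lambda>m. False)"
proof (induction xs arbitrary: v)
  case (Cons x xs)
  then show ?case
    by (cases v; cases x) (auto split: option.splits)
qed simp

definition closed_words :: "letter list set" where
  "closed_words = {w. reduced w \<and> walk (0, 0) w = Some (0, 0)}"

lemma subgroup_closed_words: "subgroup closed_words F2"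
proof (rule F2.subgroupI)
  fix g assume "g \<in> closed_words"
  then show "inv\<^bsub>F2\<^esub> g \<in> closed_words"
    using walk_inv_word[of "(0, 0)" g "(0, 0)"] by (auto simp: closed_words_def inv_F2)
next
  fix g h assume "g \<in> closed_words" "h \<in> closed_words"
  then show "g \<otimes>\<^bsub>F2\<^esub> h \<in> closed_words"
    using walk_red[of "(0, 0)" "g @ h" "(0, 0)"] by (auto simp: closed_words_def walk_append)
qed (auto simp: closed_words_def intro!: exI[of _ "[]"])

lemma walk_replicate_lb_inv:
  "on_spine (i + k) \<Longrightarrow> walk (i, 0) (replicate k lb_inv) = Some (i + k, 0)"
proof (induction k arbitrary: i)
  case (Suc k)
  then have "on_spine (Suc i)"
    by (auto elim: on_spine_mono)
  with Suc.IH[of "Suc i"] Suc.prems show ?case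
    by simp
qed simp

lemma walk_replicate_lb:
  "on_spine i \<Longrightarrow> k \<le> i \<Longrightarrow> walk (i, 0) (replicate k lb) = Some (i - k, 0)"
proof (induction k arbitrary: i)
  case (Suc k)
  then have "on_spine (i - 1)"
    by (auto elim: on_spine_mono)
  with Suc.IH[of "i - 1"] Suc.prems show ?case
    by simp
qed simp

lemma walk_replicate_la:
  "n \<in> Os \<Longrightarrow> j < n \<Longrightarrow> walk (n, j) (replicate k la) = Some (n, (j + k) mod n)"
proof (induction k arbitrary: j)
  case (Suc k)
  have "(if Suc j = n then 0 else Suc j) = Suc j mod n"
    using Suc.prems by (auto simp: mod_Suc)
  with Suc.IH[of "Suc j mod n"] Suc.prems show ?case
    by (simp add: mod_add_left_eq)
qed simp

lemma parity_replicate_la: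
  "n \<in> Os \<Longrightarrow> j + k \<le> n \<Longrightarrow> j < n \<Longrightarrow> parity (n, j) (replicate k la) = (\<lambda>m. m = n \<and> j + k = n)"
proof (induction k arbitrary: j)
  case (Suc k)
  then show ?case
    using Suc.IH[of "Suc j"] by (cases "Suc j = n") auto
qed simp

lemma walk_K_generator: "n \<in> Os \<Longrightarrow> walk (0, 0) (K_generator n) = Some (0, 0)"
  using walk_replicate_lb_inv[of 0 n] walk_replicate_la[of n 0 n] walk_replicate_lb[of n n]
  by (cases "n = 0") (auto simp: K_generator_def on_spine_Os walk_append)

lemma parity_K_generator:
  assumes "n \<in> Os" "0 < n"
  shows "parity (0, 0) (K_generator n) = (\<lambda>m. m = n)"
proof -
  have "walk (0, 0) (replicate n lb_inv) = Some (n, 0)" "walk (n, 0) (replicate n la) = Some (n, 0)"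
    using assms walk_replicate_lb_inv[of 0 n] walk_replicate_la[of n 0 n] by (auto simp: on_spine_Os)
  then show ?thesis
    using assms parity_replicate_la[of n 0 n]
    by (auto simp: K_generator_def parity_append parity_b_letters)
qed

lemma K_O_subset_closed_words: "K_O Os \<subseteq> closed_words"
  unfolding K_O_eq_generate
  using reduced_K_generator walk_K_generator
  by (intro F2.generate_subgroup_incl[OF _ subgroup_closed_words]) (auto simp: closed_words_def)

text \<open>The spine and the paths a^j on the cycles form a spanning tree; the only edges outside
  it are the closing edges, which read the generators.\<close>

definition tree_path :: "nat \<times> nat \<Rightarrow> letter list" where
  "tree_path v = replicate (fst v) lb_inv @ replicate (snd v) la"

lemma tree_path_step:
  assumes "step v x = Some w" "x = la \<or> x = lb_inv"
  shows "tree_path w = tree_path v @ [x] \<or>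
    fst v \<in> Os \<and> tree_path v @ [x] @ inv_word (tree_path w) = K_generator (fst v)"
proof -
  obtain i j where v: "v = (i, j)"
    by fastforce
  from assms(2) show ?thesis
  proof
    assume "x = la"
    then show ?thesis
      using assms(1) unfolding v
      by (auto simp: tree_path_def K_generator_def replicate_append_same split: if_splits)
  next
    assume "x = lb_inv"
    then show ?thesis
      using assms(1) unfolding v
      by (auto simp: tree_path_def replicate_append_same split: if_splits)
  qed
qed

lemma edge_word_in_K_O:
  assumes "step v x = Some w"
  shows "red (tree_path v @ [x] @ inv_word (tree_path w)) \<in> K_O Os"
proof -
  have positive: "red (tree_path v @ [x] @ inv_word (tree_path w)) \<in> K_O Os"
    if "step v x = Some w" "x = la \<or> x = lb_inv" for v x w
    using tree_path_step[OF that]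
  proof
    assume "tree_path w = tree_path v @ [x]"
    then show ?thesis
      using red_append_inv_word[of "tree_path v @ [x]"] by simp
  qed (auto simp: red_reduced reduced_K_generator K_generator_in_K_O)
  show ?thesis
  proof (cases "x = la \<or> x = lb_inv")
    case False
    then have "inv_letter x = la \<or> inv_letter x = lb_inv"
      by (cases x rule: letter_cases) auto
    then have "red (tree_path w @ [inv_letter x] @ inv_word (tree_path v)) \<in> K_O Os"
      using positive step_inv[OF assms] by blast
    then show ?thesis
      using inv_word_in_K_O by (fastforce simp flip: red_inv_word)
  qed (use assms positive in blast)
qed

lemma walk_word_in_K_O:
  "walk v xs = Some w \<Longrightarrow> red (tree_path v @ xs @ inv_word (tree_path w)) \<in> K_O Os"
proof (induction xs arbitrary: v)
  case (Cons x xs)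
  then obtain u where u: "step v x = Some u" "walk u xs = Some w"
    by (cases "step v x") auto
  have "red (tree_path v @ (x # xs) @ inv_word (tree_path w))
      = red ((tree_path v @ [x]) @ inv_word (tree_path u) @ tree_path u @ xs @ inv_word (tree_path w))"
    by (simp only: red_cancel_inv_word) simp
  also have "\<dots> = red (red (tree_path v @ [x] @ inv_word (tree_path u))
      @ red (tree_path u @ xs @ inv_word (tree_path w)))"
    by simp
  finally show ?case
    using red_append_in_K_O[OF edge_word_in_K_O[OF u(1)] Cons.IH[OF u(2)]] by simp
qed simp

lemma K_O_eq_closed_words: "K_O Os = closed_words"
proof
  show "closed_words \<subseteq> K_O Os"
  proof
    fix g assume "g \<in> closed_words"
    then show "g \<in> K_O Os"
      using walk_word_in_K_O[of "(0, 0)" g "(0, 0)"] by (simp add: closed_words_def tree_path_def red_reduced)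
  qed
qed (rule K_O_subset_closed_words)

lemma walk_conj_eq_Some_iff:
  "walk p (u @ c @ inv_word u) = Some p \<longleftrightarrow> (\<exists>v. walk p u = Some v \<and> walk v c = Some v)"
proof
  assume "walk p (u @ c @ inv_word u) = Some p"
  then obtain v v' where "walk p u = Some v" "walk v c = Some v'" "walk v' (inv_word u) = Some p"
    by (auto elim!: walk_appendE)
  moreover from this(3) have "walk p u = Some v'"
    using walk_inv_word[of v' "inv_word u" p] by simp
  ultimately show "\<exists>v. walk p u = Some v \<and> walk v c = Some v"
    by auto
qed (auto intro!: walk_appendI dest: walk_inv_word)

lemma sum_list_height_change_a_letters: "\<forall>x\<in>set xs. \<not> fst x \<Longrightarrow> (\<Sum>x\<leftarrow>xs. height_change x) = 0"
  by (induction xs) (auto simp: height_change_def)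

lemma step_b_letter_on_spine: "step v x \<noteq> None \<Longrightarrow> fst x \<Longrightarrow> snd v = 0"
  by (cases v; cases x rule: letter_cases) (auto split: if_splits)

lemma walk_concat_replicate_closed_b:
  assumes b: "\<exists>x\<in>set c. fst x" and "k \<noteq> 0"
    and closed: "walk v (concat (replicate k c)) = Some v"
  shows "walk v c = Some v"
proof -
  obtain v' where v': "walk v c = Some v'" "walk v' (concat (replicate (k - 1) c)) = Some v"
    using closed \<open>k \<noteq> 0\<close> by (cases k) (auto elim: walk_appendE)
  have "(\<Sum>x\<leftarrow>concat (replicate k c). height_change x) = int k * (\<Sum>x\<leftarrow>c. height_change x)"
    by (induction k) (simp_all add: algebra_simps)
  then have "int (fst v) = int (fst v) + int k * (\<Sum>x\<leftarrow>c. height_change x)"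
    using walk_height[OF closed] by simp
  then have "fst v' = fst v"
    using walk_height[OF v'(1)] \<open>k \<noteq> 0\<close> by simp
  show ?thesis
  proof (cases "k = 1")
    case False
    then obtain v'' where "walk v' c = Some v''"
      using v'(2) \<open>k \<noteq> 0\<close> by (cases "k - 1") (auto elim: walk_appendE)
    \<comment> \<open>from v and from v', c reaches its first b-letter at the same spine vertex\<close>
    obtain pre y post where c: "c = pre @ y # post" "fst y" "\<forall>x\<in>set pre. \<not> fst x"
      using split_list_first_propE[OF b] by blast
    obtain x1 where x1: "walk v pre = Some x1" "step x1 y \<noteq> None"
      using v'(1) unfolding c by (auto elim!: walk_appendE split: option.splits)
    obtain x2 where x2: "walk v' pre = Some x2" "step x2 y \<noteq> None"
      using \<open>walk v' c = Some v''\<close> unfolding c by (auto elim!: walk_appendE split: option.splits)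
    have "x1 = x2"
      using walk_height[OF x1(1)] walk_height[OF x2(1)] \<open>fst v' = fst v\<close>
        step_b_letter_on_spine[OF x1(2) c(2)] step_b_letter_on_spine[OF x2(2) c(2)]
      by (simp add: sum_list_height_change_a_letters[OF c(3)] prod_eq_iff)
    with x1(1) x2(1) have "v = v'"
      by (simp add: walk_inj)
    with v'(1) show ?thesis
      by simp
  qed (use v' in simp)
qed

lemma walk_replicate_a_closed:
  assumes x: "x = la \<or> x = la_inv" and "l \<noteq> 0" and closed: "walk v (replicate l x) = Some v"
  shows "fst v \<in> Os \<and> fst v \<noteq> 0 \<and> (\<forall>l'. walk v (replicate l' x) = Some v \<longleftrightarrow> fst v dvd l')"
proof -
  obtain n i where v: "v = (n, i)"
    by fastforce
  have "step v x \<noteq> None"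
    using closed \<open>l \<noteq> 0\<close> by (cases l) (auto split: option.splits)
  then have n: "n \<in> Os" "0 < n" "i < n"
    using x unfolding v by (auto split: if_splits)
  have "(i + l') mod n = i \<longleftrightarrow> n dvd l'" for l'
    using mod_eq_dvd_iff_nat[of i "i + l'" n] n(3) by simp
  then have "walk v (replicate l' la) = Some v \<longleftrightarrow> n dvd l'" for l'
    using walk_replicate_la[OF n(1,3), of l'] by (simp add: v)
  moreover have "walk v (replicate l' la_inv) = Some v \<longleftrightarrow> walk v (replicate l' la) = Some v" for l'
    using walk_inv_word[of v "replicate l' la" v] walk_inv_word[of v "replicate l' la_inv" v] by auto
  ultimately show ?thesis
    using x n by (auto simp: v)
qed

lemma walk_concat_replicate_closed_a:
  assumes "cyclically_reduced c" "\<forall>x\<in>set c. \<not> fst x" "k \<noteq> 0"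
    and closed: "walk v (concat (replicate k c)) = Some v"
  shows "fst v \<in> Os \<and> fst v \<noteq> 0 \<and> walk v (concat (replicate (fst v) c)) = Some v"
proof -
  define x where "x = hd c"
  define j where "j = length c"
  have "c = replicate j x"
    using reduced_a_letters_eq_replicate assms(1,2) by (simp add: x_def j_def cyclically_reduced_def)
  then have pow_c: "concat (replicate l c) = replicate (l * j) x" for l
    by (simp add: concat_replicate_replicate)
  have "x \<in> set c" "j \<noteq> 0"
    using assms(1) by (auto simp: x_def j_def cyclically_reduced_def)
  then have x: "x = la \<or> x = la_inv"
    using assms(2) by (cases x rule: letter_cases) auto
  show ?thesis
    using walk_replicate_a_closed[OF x, of "k * j"] closed assms(3) \<open>j \<noteq> 0\<close> pow_c by auto
qed

lemma walk_concat_replicate_closed_Os: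
  assumes "1 \<in> Os" "cyclically_reduced c" "k \<noteq> 0" "walk v (concat (replicate k c)) = Some v"
  shows "\<exists>n\<in>Os. n \<noteq> 0 \<and> walk v (concat (replicate n c)) = Some v"
proof (cases "\<exists>x\<in>set c. fst x")
  case True
  then have "walk v (concat (replicate 1 c)) = Some v"
    using walk_concat_replicate_closed_b assms(3,4) by simp
  with assms(1) show ?thesis
    by blast
next
  case False
  then show ?thesis
    using walk_concat_replicate_closed_a[OF assms(2) _ assms(3,4)] by auto
qed

section \<open>Relative orders in F2\<close>

lemma conj_pow_in_K_O_iff:
  fixes k :: nat
  assumes "reduced (u @ c @ inv_word u)" "cyclically_reduced c" "k \<noteq> 0"
  shows "(u @ c @ inv_word u) [^]\<^bsub>F2\<^esub> k \<in> K_O Os \<longleftrightarrow>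
    (\<exists>v. walk (0, 0) u = Some v \<and> walk v (concat (replicate k c)) = Some v)"
  using F2_pow_conj[OF assms] reduced_conj_power[OF assms]
  by (simp add: K_O_eq_closed_words closed_words_def walk_conj_eq_Some_iff)

lemma pow_in_K_O_imp_Os_pow_in_K_O:
  fixes k :: nat
  assumes "1 \<in> Os" "reduced g" "k \<noteq> 0" "g [^]\<^bsub>F2\<^esub> k \<in> K_O Os"
  shows "\<exists>n\<in>Os. n \<noteq> 0 \<and> g [^]\<^bsub>F2\<^esub> n \<in> K_O Os"
proof (cases "g = []")
  case True
  with assms(1) show ?thesis
    by (intro bexI[of _ 1]) auto
next
  case False
  then obtain u c where g: "g = u @ c @ inv_word u" and c: "cyclically_reduced c"
    using ex_conj_cyclically_reduced[OF assms(2)] by blast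
  note pow_iff = conj_pow_in_K_O_iff[OF assms(2)[unfolded g] c]
  obtain v where u: "walk (0, 0) u = Some v" and "walk v (concat (replicate k c)) = Some v"
    using pow_iff[OF assms(3)] assms(4) g by auto
  then obtain n where "n \<in> Os" "n \<noteq> 0" "walk v (concat (replicate n c)) = Some v"
    using walk_concat_replicate_closed_Os[OF assms(1) c assms(3)] by blast
  then show ?thesis
    using pow_iff[of n] u g by blast
qed

lemma Ord_in_K_O_in_Os:
  assumes "0 \<in> Os" "1 \<in> Os" "\<And>n d. n \<in> Os \<Longrightarrow> n \<noteq> 0 \<Longrightarrow> d dvd n \<Longrightarrow> d \<in> Os" "reduced g"
  shows "Ord_in F2 (K_O Os) g \<in> Os"
proof (cases "Ord_in F2 (K_O Os) g = 0")
  case False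
  then obtain k :: nat where "k \<ge> 1" "g [^]\<^bsub>F2\<^esub> k \<in> K_O Os"
    by (auto simp: Ord_in_eq_0_iff)
  then obtain n where "n \<in> Os" "n \<noteq> 0" "g [^]\<^bsub>F2\<^esub> n \<in> K_O Os"
    using pow_in_K_O_imp_Os_pow_in_K_O[OF assms(2,4), of k] by auto
  moreover from this have "Ord_in F2 (K_O Os) g dvd n"
    using assms(4) by (intro F2.Ord_in_dvd subgroup_K_O) auto
  ultimately show ?thesis
    using assms(3) by blast
qed (simp add: assms(1))

lemma Ord_in_K_O_gen_b: "Ord_in F2 (K_O Os) gen_b = 0"
proof -
  have "walk (0, 0) (replicate k lb) = None" if "k \<ge> 1" for k
    using that by (cases k) auto
  then show ?thesis
    by (auto simp: Ord_in_eq_0_iff gen_b_def F2_pow_letter K_O_eq_closed_words closed_words_def)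
qed

lemma Ord_in_K_O_conj_a:
  assumes "n \<in> Os" "n \<noteq> 0"
  shows "Ord_in F2 (K_O Os) (replicate n lb_inv @ [la] @ replicate n lb) = n"
proof (rule Ord_in_eqI_dvd[OF assms(2)])
  fix k :: nat
  assume "k \<ge> 1"
  have "reduced (replicate n lb_inv @ [la] @ inv_word (replicate n lb_inv))"
    using assms by (simp add: reduced_append reduced_Cons reduced_replicate)
  moreover have "walk (0, 0) (replicate n lb_inv) = Some (n, 0)"
    using walk_replicate_lb_inv[of 0 n] assms by (simp add: on_spine_Os)
  moreover have "walk (n, 0) (replicate k la) = Some (n, 0) \<longleftrightarrow> n dvd k"
    using walk_replicate_la[of n 0 k] assms by (simp add: dvd_eq_mod_eq_0)
  ultimately show "(replicate n lb_inv @ [la] @ replicate n lb) [^]\<^bsub>F2\<^esub> k \<in> K_O Os \<longleftrightarrow> n dvd k"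
    using conj_pow_in_K_O_iff[of "replicate n lb_inv" "[la]" k] \<open>k \<ge> 1\<close>
    by (simp add: cyclically_reduced_def)
qed

lemma Ord_set_K_O:
  assumes "0 \<in> Os" "1 \<in> Os" "\<And>n d. n \<in> Os \<Longrightarrow> n \<noteq> 0 \<Longrightarrow> d dvd n \<Longrightarrow> d \<in> Os"
  shows "Ord_set F2 (K_O Os) = Os"
proof
  show "Ord_set F2 (K_O Os) \<subseteq> Os"
    using Ord_in_K_O_in_Os[OF assms] by (auto simp: Ord_set_def)
  show "Os \<subseteq> Ord_set F2 (K_O Os)"
  proof
    fix n assume "n \<in> Os"
    show "n \<in> Ord_set F2 (K_O Os)"
    proof (cases "n = 0")
      case True
      then show ?thesis
        unfolding Ord_set_def using Ord_in_K_O_gen_b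
        by (intro image_eqI[of _ _ gen_b]) (auto simp: gen_b_def)
    next
      case False
      have "reduced (replicate n lb_inv @ [la] @ replicate n lb)"
        using False by (simp add: reduced_append reduced_Cons reduced_replicate)
      then show ?thesis
        unfolding Ord_set_def using Ord_in_K_O_conj_a[OF \<open>n \<in> Os\<close> False]
        by (intro image_eqI[of _ _ "replicate n lb_inv @ [la] @ replicate n lb"]) auto
    qed
  qed
qed

section \<open>The rank of K_O\<close>

lemma parity_red_append_closed_words:
  assumes "g \<in> closed_words" "h \<in> closed_words"
  shows "parity (0, 0) (red (g @ h)) m \<longleftrightarrow> parity (0, 0) g m \<noteq> parity (0, 0) h m"
proof -
  have g: "walk (0, 0) g = Some (0, 0)" and gh: "walk (0, 0) (g @ h) = Some (0, 0)"
    using assms by (auto simp: closed_words_def walk_append)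
  have "parity (0, 0) (red (g @ h)) = parity (0, 0) (g @ h)"
    using walk_red[OF gh] by blast
  then show ?thesis
    using parity_append[OF g] by simp
qed

lemma parity_generate_mem_parity_sums:
  assumes "S \<subseteq> closed_words" "finite S" "h \<in> generate F2 S"
  shows "parity (0, 0) h \<in> parity_sum ` Pow (parity (0, 0) ` S)"
proof -
  have generate_closed_words: "generate F2 S \<subseteq> closed_words"
    using assms(1) subgroup_closed_words by (rule F2.generate_subgroup_incl)
  have fin: "finite (parity (0, 0) ` S)"
    using assms(2) by simp
  from assms(3) show ?thesis
  proof (induction h rule: generate.induct)
    case one
    then show ?case
      by (auto intro: image_eqI[of _ _ "{}"])
  next
    case (incl h)
    then show ?case
      by (intro image_eqI[of _ _ "{parity (0, 0) h}"]) auto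
  next
    case (inv h)
    then have "walk (0, 0) h = Some (0, 0)" "reduced h"
      using assms(1) by (auto simp: closed_words_def)
    then have "parity (0, 0) (inv\<^bsub>F2\<^esub> h) = parity (0, 0) h"
      using walk_inv_word by (simp add: inv_F2)
    with inv show ?case
      by (intro image_eqI[of _ _ "{parity (0, 0) h}"]) auto
  next
    case (eng g h)
    then have "(\<lambda>m. parity (0, 0) g m \<noteq> parity (0, 0) h m) \<in> parity_sum ` Pow (parity (0, 0) ` S)"
      by (intro parity_sum_Pow_xor_closed[OF fin])
    moreover have "g \<in> closed_words" "h \<in> closed_words"
      using eng.hyps generate_closed_words by auto
    ultimately show ?case
      by (simp add: parity_red_append_closed_words)
  qed
qed

lemma K_O_generating_set_lepoll:
  assumes "S \<subseteq> carrier F2" "generate F2 S = K_O Os"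
  shows "Os - {0} \<lesssim> S"
proof (cases "finite S")
  case False
  have "Os - {0} \<lesssim> (UNIV :: nat set)"
    by (rule subset_imp_lepoll) simp
  also have "(UNIV :: nat set) \<lesssim> S"
    using False infinite_le_lepoll by blast
  finally show ?thesis .
next
  case True
  have "S \<subseteq> closed_words"
    using assms(2) generate.incl[of _ S F2] K_O_eq_closed_words by blast
  have "(\<lambda>m. m = n) \<in> parity_sum ` Pow (parity (0, 0) ` S)" if "n \<in> Os - {0}" for n
  proof -
    have "K_generator n \<in> generate F2 S"
      using K_generator_in_K_O[of n Os] that assms(2) by simp
    then have "parity (0, 0) (K_generator n) \<in> parity_sum ` Pow (parity (0, 0) ` S)"
      by (rule parity_generate_mem_parity_sums[OF \<open>S \<subseteq> closed_words\<close> True])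
    then show ?thesis
      using parity_K_generator[of n] that by simp
  qed
  then have "finite (Os - {0}) \<and> card (Os - {0}) \<le> card (parity (0, 0) ` S)"
    using True by (intro card_le_if_unit_vectors_parity_sums) auto
  moreover have "card (parity (0, 0) ` S) \<le> card S"
    using True by (rule card_image_le)
  ultimately show ?thesis
    using True by (simp add: lepoll_iff_card_le)
qed

end

theorem proposition4p2:
  fixes Os :: "nat set"
  assumes "0 \<in> Os"
    and "Os \<noteq> {0}"
    and "\<And>n d. n \<in> Os \<Longrightarrow> n \<noteq> 0 \<Longrightarrow> d dvd n \<Longrightarrow> d \<in> Os"
  shows "Ord_set F2 (K_O Os) = Os \<and> rank_eq_card F2 (K_O Os) (Os - {0})"
proof
  obtain n where "n \<in> Os" "n \<noteq> 0"
    using assms(1,2) by blast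
  then have "1 \<in> Os"
    using assms(3)[of n 1] by simp
  then show "Ord_set F2 (K_O Os) = Os"
    by (rule Ord_set_K_O[OF assms(1) _ assms(3)])
  have "K_generator ` (Os - {0}) \<approx> Os - {0}"
    by (rule inj_on_image_eqpoll_self[OF inj_on_subset[OF inj_K_generator subset_UNIV]])
  then show "rank_eq_card F2 (K_O Os) (Os - {0})"
    unfolding rank_eq_card_def using reduced_K_generator generate_K_generator_nonzero K_O_generating_set_lepoll
    by (intro conjI exI[of _ "K_generator ` (Os - {0})"]) auto
qed

end
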